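(* Let $\Sigma$ be a signature, let $\mathscr F_\Sigma:\mathbf{Fuz}_H\to\mathbf{Alg}(\Sigma)$ be a left adjoint to the forgetful functor $\mathscr U_\Sigma:\mathbf{Alg}(\Sigma)\to\mathbf{Fuz}_H$, and let $\mathscr X_0=\{\mathscr F_\Sigma(X,c_\bot)\mid X\text{ a set}\}$ (where $c_\bot$ is constantly $\bot$) and $\mathscr X_{\mathsf E}=\{\mathscr F_\Sigma(X,\mu_X)\mid(X,\mu_X)\in\mathbf{Fuz}_H\}$. For a class $\mathscr X$ of $\Sigma$-algebras let $\mathscr E_{\Sigma,\mathscr X}$ be the class of $e\in\mathscr E_\Sigma$ such that every $P\in\mathscr X$ is projective with respect to $e$. Then: (1) $\mathscr E_{\Sigma,\mathscr X_0}=\mathscr E_\Sigma$; (2) $\mathscr E_{\Sigma,\mathscr X_{\mathsf E}}=\{e\in\mathscr E_\Sigma\mid\mathscr U_\Sigma(e)\text{ is a split epimorphism in }\mathbf{Fuz}_H\}$.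
   Context: $H$ is a frame with bottom $\bot$. An $H$-fuzzy set is a pair $(A,\mu_A)$ of a set $A$ and a function $\mu_A:A\to H$; an arrow $f:(A,\mu_A)\to(B,\mu_B)$ is a function with $\mu_A(x)\le\mu_B(f(x))$; they form $\mathbf{Fuz}_H$. For $n\ge1$, $(A,\mu_A)^n=(A^n,\mu)$ with $\mu(a_1,\dots,a_n)=\bigwedge_i\mu_A(a_i)$. A signature $\Sigma=(O,\mathrm{ar},C)$ consists of a set $O$ of operation symbols with arity $\mathrm{ar}:O\to\{1,2,\dots\}$ and a set $C$ of constant symbols. A $\Sigma$-algebra $\mathcal A=((A,\mu_A),\Sigma^{\mathcal A})$ is an $H$-fuzzy set $(A,\mu_A)$ together with, for each $f\in O$, an arrow $f^{\mathcal A}:(A,\mu_A)^{\mathrm{ar}(f)}\to(A,\mu_A)$ of $\mathbf{Fuz}_H$ and, for each $c\in C$, an element $c^{\mathcal A}\in A$. A morphism of $\Sigma$-algebras is an arrow of $\mathbf{Fuz}_H$ between carriers preserving constants and commuting with operations; this gives the category $\mathbf{Alg}(\Sigma)$, with forgetful functor $\mathscr U_\Sigma$ to $\mathbf{Fuz}_H$ (which has a left adjoint). $\mathscr E_\Sigma$ is the class of morphisms of $\Sigma$-algebras whose underlying function is surjective. An object $P$ is projective with respect to an arrow $e:A\to B$ if for every $h:P\to B$ there is $k:P\to A$ with $e\circ k=h$. *)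

theory Defs
  imports Main
begin

text \<open>The frame H is a type 'h of class complete_lattice; the frame law is assumed
 in the theorem. An H-fuzzy set is a carrier A :: 'a set with mu :: 'a => 'h.\<close>

definition fuz_arrow :: "'a set \<Rightarrow> ('a \<Rightarrow> 'h::order) \<Rightarrow> 'b set \<Rightarrow> ('b \<Rightarrow> 'h) \<Rightarrow> ('a \<Rightarrow> 'b) \<Rightarrow> bool" where
  "fuz_arrow A muA B muB f \<longleftrightarrow> (\<forall>x\<in>A. f x \<in> B \<and> muA x \<le> muB (f x))"

definition is_frame :: "'h::complete_lattice itself \<Rightarrow> bool" where
  "is_frame _ \<longleftrightarrow> (\<forall>(a::'h) S. inf a (Sup S) = Sup ((inf a) ` S))"

record ('a, 'h, 'o, 'c) alg =
  acar :: "'a set"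
  amu :: "'a \<Rightarrow> 'h"
  aop :: "'o \<Rightarrow> 'a list \<Rightarrow> 'a"
  acst :: "'c \<Rightarrow> 'a"

definition signature :: "'o set \<Rightarrow> ('o \<Rightarrow> nat) \<Rightarrow> 'c set \<Rightarrow> bool" where
  "signature Ops ar C \<longleftrightarrow> (\<forall>f\<in>Ops. 1 \<le> ar f)"

text \<open>The arrow condition for f^A : (A,mu_A)^n -> (A,mu_A): mu of the tuple is the
 meet of the memberships of its components (n >= 1).\<close>

definition is_alg :: "'o set \<Rightarrow> ('o \<Rightarrow> nat) \<Rightarrow> 'c set \<Rightarrow> ('a, 'h::complete_lattice, 'o, 'c) alg \<Rightarrow> bool" where
  "is_alg Ops ar C A \<longleftrightarrow>
     (\<forall>f\<in>Ops. \<forall>xs. set xs \<subseteq> acar A \<and> length xs = ar f \<longrightarrow>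
         aop A f xs \<in> acar A \<and> Inf (amu A ` set xs) \<le> amu A (aop A f xs))
   \<and> (\<forall>c\<in>C. acst A c \<in> acar A)"

definition alg_hom :: "'o set \<Rightarrow> ('o \<Rightarrow> nat) \<Rightarrow> 'c set \<Rightarrow> ('a, 'h::complete_lattice, 'o, 'c) alg
     \<Rightarrow> ('b, 'h, 'o, 'c) alg \<Rightarrow> ('a \<Rightarrow> 'b) \<Rightarrow> bool" where
  "alg_hom Ops ar C A B h \<longleftrightarrow>
     fuz_arrow (acar A) (amu A) (acar B) (amu B) h
   \<and> (\<forall>c\<in>C. h (acst A c) = acst B c)
   \<and> (\<forall>f\<in>Ops. \<forall>xs. set xs \<subseteq> acar A \<and> length xs = ar f \<longrightarrow>
         h (aop A f xs) = aop B f (map h xs))"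

definition in_E_Sigma :: "'o set \<Rightarrow> ('o \<Rightarrow> nat) \<Rightarrow> 'c set \<Rightarrow> ('a, 'h::complete_lattice, 'o, 'c) alg
     \<Rightarrow> ('b, 'h, 'o, 'c) alg \<Rightarrow> ('a \<Rightarrow> 'b) \<Rightarrow> bool" where
  "in_E_Sigma Ops ar C A B e \<longleftrightarrow> alg_hom Ops ar C A B e \<and> e ` acar A = acar B"

text \<open>P is projective w.r.t. e : A -> B. Morphisms are identified with their
 restriction to the carrier of the domain.\<close>

definition projective_wrt :: "'o set \<Rightarrow> ('o \<Rightarrow> nat) \<Rightarrow> 'c set \<Rightarrow> ('p, 'h::complete_lattice, 'o, 'c) alg
     \<Rightarrow> ('a, 'h, 'o, 'c) alg \<Rightarrow> ('b, 'h, 'o, 'c) alg \<Rightarrow> ('a \<Rightarrow> 'b) \<Rightarrow> bool" where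
  "projective_wrt Ops ar C P A B e \<longleftrightarrow>
     (\<forall>h. alg_hom Ops ar C P B h \<longrightarrow>
        (\<exists>k. alg_hom Ops ar C P A k \<and> (\<forall>x\<in>acar P. e (k x) = h x)))"

definition split_epi_fuz :: "'a set \<Rightarrow> ('a \<Rightarrow> 'h::order) \<Rightarrow> 'b set \<Rightarrow> ('b \<Rightarrow> 'h) \<Rightarrow> ('a \<Rightarrow> 'b) \<Rightarrow> bool" where
  "split_epi_fuz A muA B muB e \<longleftrightarrow>
     fuz_arrow A muA B muB e \<and>
     (\<exists>s. fuz_arrow B muB A muA s \<and> (\<forall>y\<in>B. e (s y) = y))"

section \<open>A concrete left adjoint F_Sigma: the free (term) algebra\<close>

datatype ('o, 'c, 'x) trm = Var 'x | Cst 'c | App 'o "('o, 'c, 'x) trm list"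

inductive wft :: "'o set \<Rightarrow> ('o \<Rightarrow> nat) \<Rightarrow> 'c set \<Rightarrow> 'x set \<Rightarrow> ('o, 'c, 'x) trm \<Rightarrow> bool"
  for Ops ar C X where
  "x \<in> X \<Longrightarrow> wft Ops ar C X (Var x)"
| "c \<in> C \<Longrightarrow> wft Ops ar C X (Cst c)"
| "f \<in> Ops \<Longrightarrow> length ts = ar f \<Longrightarrow> \<forall>t\<in>set ts. wft Ops ar C X t \<Longrightarrow> wft Ops ar C X (App f ts)"

text \<open>Least membership making the generators and all operations arrows.\<close>

fun tmu :: "('x \<Rightarrow> 'h::complete_lattice) \<Rightarrow> ('o, 'c, 'x) trm \<Rightarrow> 'h" where
  "tmu mu (Var x) = mu x"
| "tmu mu (Cst c) = bot"
| "tmu mu (App f ts) = Inf (set (map (tmu mu) ts))"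

definition free_alg :: "'o set \<Rightarrow> ('o \<Rightarrow> nat) \<Rightarrow> 'c set \<Rightarrow> 'x set \<Rightarrow> ('x \<Rightarrow> 'h::complete_lattice)
     \<Rightarrow> (('o, 'c, 'x) trm, 'h, 'o, 'c) alg" where
  "free_alg Ops ar C X mu =
     \<lparr>acar = {t. wft Ops ar C X t}, amu = tmu mu, aop = App, acst = Cst\<rparr>"

end

theory Submission
  imports Defs
begin

text \<open>By the adjunction, a morphism out of the free algebra on \<open>(X, \<mu>)\<close> is the same as an
  arrow out of \<open>(X, \<mu>)\<close>, so \<open>\<F>(X, \<mu>)\<close> is projective with respect to \<open>e\<close> iff \<open>(X, \<mu>)\<close> is
  projective with respect to \<open>\<U>(e)\<close> in \<open>Fuz_H\<close>. Arrows out of \<open>(X, \<bottom>)\<close> are arbitrary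
  maps, which lift along any surjection; arrows into \<open>\<U>(B)\<close> lift along a split epimorphism
  by composing with the section; and lifting the identity of \<open>\<U>(B)\<close> yields a section.\<close>

definition fuz_projective ::
  "'x set \<Rightarrow> ('x \<Rightarrow> 'h::order) \<Rightarrow> 'a set \<Rightarrow> ('a \<Rightarrow> 'h) \<Rightarrow> 'b set \<Rightarrow> ('b \<Rightarrow> 'h) \<Rightarrow> ('a \<Rightarrow> 'b) \<Rightarrow> bool"
  where
  "fuz_projective X mu A muA B muB e \<longleftrightarrow>
     (\<forall>h. fuz_arrow X mu B muB h \<longrightarrow> (\<exists>g. fuz_arrow X mu A muA g \<and> (\<forall>x\<in>X. e (g x) = h x)))"

lemma fuz_arrow_comp:
  assumes "fuz_arrow A muA B muB f" and "fuz_arrow B muB C muC g"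
  shows "fuz_arrow A muA C muC (g \<circ> f)"
  using assms unfolding fuz_arrow_def by (auto intro: order_trans)

lemma alg_hom_comp:
  assumes "alg_hom Ops ar C A B f" and "alg_hom Ops ar C B D g"
  shows "alg_hom Ops ar C A D (g \<circ> f)"
proof -
  have "g (f (aop A op xs)) = aop D op (map (g \<circ> f) xs)"
    if "op \<in> Ops" "set xs \<subseteq> acar A" "length xs = ar op" for op xs
  proof -
    have "set (map f xs) \<subseteq> acar B"
      using assms(1) that(2) unfolding alg_hom_def fuz_arrow_def by auto
    then show ?thesis
      using assms that unfolding alg_hom_def by simp
  qed
  then show ?thesis
    using assms fuz_arrow_comp unfolding alg_hom_def by fastforce
qed

fun term_eval :: "('a, 'h, 'o, 'c) alg \<Rightarrow> ('x \<Rightarrow> 'a) \<Rightarrow> ('o, 'c, 'x) trm \<Rightarrow> 'a" where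
  "term_eval A g (Var x) = g x"
| "term_eval A g (Cst c) = acst A c"
| "term_eval A g (App f ts) = aop A f (map (term_eval A g) ts)"

lemma fuz_arrow_term_eval:
  fixes A :: "('a, 'h::complete_lattice, 'o, 'c) alg"
  assumes algA: "is_alg Ops ar C A" and g: "fuz_arrow X mu (acar A) (amu A) g"
  shows "fuz_arrow {t. wft Ops ar C X t} (tmu mu) (acar A) (amu A) (term_eval A g)"
proof -
  have "term_eval A g t \<in> acar A \<and> tmu mu t \<le> amu A (term_eval A g t)"
    if "wft Ops ar C X t" for t
    using that
  proof (induction t rule: wft.induct)
    case (1 x)
    then show ?case using g by (simp add: fuz_arrow_def)
  next
    case (2 c)
    then show ?case using algA by (simp add: is_alg_def)
  next
    case (3 f ts)
    let ?vs = "map (term_eval A g) ts"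
    have "set ?vs \<subseteq> acar A" and "length ?vs = ar f"
      using 3 by auto
    then have "aop A f ?vs \<in> acar A \<and> Inf (amu A ` set ?vs) \<le> amu A (aop A f ?vs)"
      using algA 3(1) unfolding is_alg_def by blast
    moreover have "Inf (tmu mu ` set ts) \<le> Inf (amu A ` set ?vs)"
    proof (rule Inf_greatest)
      fix y assume "y \<in> amu A ` set ?vs"
      then obtain t where t: "t \<in> set ts" and y: "y = amu A (term_eval A g t)" by auto
      have "Inf (tmu mu ` set ts) \<le> tmu mu t" using t by (simp add: Inf_lower)
      also have "\<dots> \<le> y" using 3(3) t y by auto
      finally show "Inf (tmu mu ` set ts) \<le> y" .
    qed
    ultimately show ?case by (auto intro: order_trans)
  qed
  then show ?thesis
    unfolding fuz_arrow_def by simp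
qed

lemma alg_hom_term_eval:
  assumes "is_alg Ops ar C A" and "fuz_arrow X mu (acar A) (amu A) g"
  shows "alg_hom Ops ar C (free_alg Ops ar C X mu) A (term_eval A g)"
  using fuz_arrow_term_eval[OF assms]
  unfolding alg_hom_def free_alg_def by simp

lemma free_alg_Var: "x \<in> X \<Longrightarrow> Var x \<in> acar (free_alg Ops ar C X mu)"
  by (simp add: free_alg_def wft.intros)

lemma fuz_arrow_restrict_Var:
  assumes "alg_hom Ops ar C (free_alg Ops ar C X mu) B h"
  shows "fuz_arrow X mu (acar B) (amu B) (h \<circ> Var)"
proof -
  have "fuz_arrow (acar (free_alg Ops ar C X mu)) (tmu mu) (acar B) (amu B) h"
    using assms unfolding alg_hom_def by (simp add: free_alg_def)
  then show ?thesis
    unfolding fuz_arrow_def by (auto dest: bspec[OF _ free_alg_Var])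
qed

lemma free_alg_hom_eqI:
  assumes h1: "alg_hom Ops ar C (free_alg Ops ar C X mu) B h1"
    and h2: "alg_hom Ops ar C (free_alg Ops ar C X mu) B h2"
    and Var: "\<forall>x\<in>X. h1 (Var x) = h2 (Var x)"
    and t: "t \<in> acar (free_alg Ops ar C X mu)"
  shows "h1 t = h2 t"
  using t[unfolded free_alg_def, simplified]
proof (induction t rule: wft.induct)
  case (1 x)
  then show ?case using Var by simp
next
  case (2 c)
  then show ?case using h1 h2 unfolding alg_hom_def free_alg_def by simp
next
  case (3 f ts)
  then have ts: "set ts \<subseteq> acar (free_alg Ops ar C X mu)"
    by (auto simp: free_alg_def)
  have "h1 (App f ts) = aop B f (map h1 ts)"
    using h1 ts 3(1,2) unfolding alg_hom_def by (simp add: free_alg_def)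
  also have "map h1 ts = map h2 ts"
    using 3(3) by simp
  also have "aop B f (map h2 ts) = h2 (App f ts)"
    using h2 ts 3(1,2) unfolding alg_hom_def by (simp add: free_alg_def)
  finally show ?case .
qed

lemma projective_free_alg_iff:
  assumes algA: "is_alg Ops ar C A" and algB: "is_alg Ops ar C B"
    and e: "alg_hom Ops ar C A B e"
  shows "projective_wrt Ops ar C (free_alg Ops ar C X mu) A B e
     \<longleftrightarrow> fuz_projective X mu (acar A) (amu A) (acar B) (amu B) e"
proof
  assume proj: "projective_wrt Ops ar C (free_alg Ops ar C X mu) A B e"
  show "fuz_projective X mu (acar A) (amu A) (acar B) (amu B) e"
    unfolding fuz_projective_def
  proof (intro allI impI)
    fix h assume "fuz_arrow X mu (acar B) (amu B) h"
    then obtain k where k: "alg_hom Ops ar C (free_alg Ops ar C X mu) A k"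
      and ek: "\<forall>t\<in>acar (free_alg Ops ar C X mu). e (k t) = term_eval B h t"
      using proj alg_hom_term_eval[OF algB] unfolding projective_wrt_def by blast
    have "\<forall>x\<in>X. e ((k \<circ> Var) x) = h x"
      using ek free_alg_Var by fastforce
    then show "\<exists>g. fuz_arrow X mu (acar A) (amu A) g \<and> (\<forall>x\<in>X. e (g x) = h x)"
      using fuz_arrow_restrict_Var[OF k] by blast
  qed
next
  assume lift: "fuz_projective X mu (acar A) (amu A) (acar B) (amu B) e"
  show "projective_wrt Ops ar C (free_alg Ops ar C X mu) A B e"
    unfolding projective_wrt_def
  proof (intro allI impI)
    fix h assume h: "alg_hom Ops ar C (free_alg Ops ar C X mu) B h"
    obtain g where g: "fuz_arrow X mu (acar A) (amu A) g" and eg: "\<forall>x\<in>X. e (g x) = (h \<circ> Var) x"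
      using lift fuz_arrow_restrict_Var[OF h] unfolding fuz_projective_def by blast
    have k: "alg_hom Ops ar C (free_alg Ops ar C X mu) A (term_eval A g)"
      using alg_hom_term_eval[OF algA g] .
    have "e (term_eval A g t) = h t" if "t \<in> acar (free_alg Ops ar C X mu)" for t
      using free_alg_hom_eqI[OF alg_hom_comp[OF k e] h _ that] eg by simp
    with k show "\<exists>k. alg_hom Ops ar C (free_alg Ops ar C X mu) A k \<and>
        (\<forall>t\<in>acar (free_alg Ops ar C X mu). e (k t) = h t)"
      by blast
  qed
qed

lemma fuz_projective_bot:
  fixes muA :: "'a \<Rightarrow> 'h::order_bot"
  assumes "e ` A = B"
  shows "fuz_projective X (\<lambda>_. bot) A muA B muB e"
  unfolding fuz_projective_def
proof (intro allI impI)
  fix h assume "fuz_arrow X (\<lambda>_. bot) B muB h"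
  then have "\<forall>x\<in>X. \<exists>a\<in>A. e a = h x"
    using assms unfolding fuz_arrow_def by (metis imageE)
  then obtain g where "\<forall>x\<in>X. g x \<in> A \<and> e (g x) = h x" by metis
  then show "\<exists>g. fuz_arrow X (\<lambda>_. bot) A muA g \<and> (\<forall>x\<in>X. e (g x) = h x)"
    unfolding fuz_arrow_def by auto
qed

lemma split_epi_fuz_imp_fuz_projective:
  assumes "split_epi_fuz A muA B muB e"
  shows "fuz_projective X mu A muA B muB e"
proof -
  obtain s where s: "fuz_arrow B muB A muA s" and es: "\<forall>y\<in>B. e (s y) = y"
    using assms unfolding split_epi_fuz_def by blast
  have "fuz_arrow X mu A muA (s \<circ> h) \<and> (\<forall>x\<in>X. e ((s \<circ> h) x) = h x)"
    if "fuz_arrow X mu B muB h" for h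
    using fuz_arrow_comp[OF that s] es that unfolding fuz_arrow_def by simp
  then show ?thesis
    unfolding fuz_projective_def by blast
qed

lemma fuz_projective_self_imp_split_epi_fuz:
  assumes e: "fuz_arrow A muA B muB e" and proj: "fuz_projective B muB A muA B muB e"
  shows "split_epi_fuz A muA B muB e"
proof -
  have "fuz_arrow B muB B muB id"
    by (simp add: fuz_arrow_def)
  then show ?thesis
    using e proj unfolding fuz_projective_def split_epi_fuz_def by force
qed

theorem lemma51:
  fixes Ops :: "'o set" and ar :: "'o \<Rightarrow> nat" and C :: "'c set"
    and A :: "('a, 'h::complete_lattice, 'o, 'c) alg"
    and B :: "('b, 'h, 'o, 'c) alg"
    and e :: "'a \<Rightarrow> 'b"
  assumes frame: "is_frame TYPE('h)"
    and sig: "signature Ops ar C"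
    and algA: "is_alg Ops ar C A"
    and algB: "is_alg Ops ar C B"
    and eE: "in_E_Sigma Ops ar C A B e"
  shows "(\<forall>X :: 'x set. projective_wrt Ops ar C (free_alg Ops ar C X (\<lambda>_. bot)) A B e)
       \<and> (split_epi_fuz (acar A) (amu A) (acar B) (amu B) e \<longrightarrow>
            (\<forall>(X :: 'y set) mu. projective_wrt Ops ar C (free_alg Ops ar C X mu) A B e))
       \<and> ((\<forall>(X :: 'b set) mu. projective_wrt Ops ar C (free_alg Ops ar C X mu) A B e) \<longrightarrow>
            split_epi_fuz (acar A) (amu A) (acar B) (amu B) e)"
proof -
  have e: "alg_hom Ops ar C A B e" and surj: "e ` acar A = acar B"
    using eE by (auto simp: in_E_Sigma_def)
  note proj_iff = projective_free_alg_iff[OF algA algB e]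
  have "fuz_arrow (acar A) (amu A) (acar B) (amu B) e"
    using e by (simp add: alg_hom_def)
  then show ?thesis
    unfolding proj_iff
    using fuz_projective_bot[OF surj] split_epi_fuz_imp_fuz_projective
      fuz_projective_self_imp_split_epi_fuz
    by blast
qed

end
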